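(* Let $G$ be a countable discrete group, let $A\subset\mathcal B(L^p(X,\mu))$ be a weak* closed subalgebra ($p\in(1,\infty)$, $L^p(X,\mu)$ $\sigma$-finite separable), and let $\alpha$ be a weak* continuous isometric action of $G$ on $A$. Then for every $t\in G$ there is a weak* continuous contractive linear map $E_t:W^*_p(G,A,\alpha)\to A$ such that $E_t\big(\sum_{s\in G}\pi(a_s)\lambda_p^E(s)\big)=a_t$ for every finitely supported family $(a_s)_{s\in G}$ in $A$.
   Context: $E=L^p(X,\mu)$; $\mathcal B(E)$ carries the weak* topology as dual of the nuclear operators $E'\widehat\otimes E$. A weak* continuous isometric action is a homomorphism $\alpha$ from $G$ into isometric weak* continuous automorphisms of $A$. On $\ell^p(G,E)=\ell^p(G)\otimes_pE$, $(\pi(a)\xi)(s)=\alpha_{s^{-1}}(a)\xi(s)$ and $(\lambda_p^E(s)\xi)(t)=\xi(s^{-1}t)$; $W^*_p(G,A,\alpha)$ is the weak* closure in $\mathcal B(\ell^p(G)\otimes_pE)$ of the finite sums $\sum_s\pi(a_s)\lambda_p^E(s)$. *)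

theory Defs
  imports "HOL-Analysis.Analysis" "HOL-Library.Function_Algebras"
begin

text \<open>Concrete model of L^p(X,mu) (complex scalars): p-integrable measurable functions,
  identified up to a.e. equality via ae_eq. Operators on L^p are functions on functions,
  identified via op_eq (agreement a.e. on every L^p input). Sums of operators and the zero
  operator come from the pointwise algebra on function types.\<close>

type_synonym 'x op = "('x \<Rightarrow> complex) \<Rightarrow> ('x \<Rightarrow> complex)"

definition Lp :: "'x measure \<Rightarrow> real \<Rightarrow> ('x \<Rightarrow> complex) set" where
  "Lp M p = {f. f \<in> borel_measurable M \<and> integrable M (\<lambda>x. norm (f x) powr p)}"

definition lp_norm :: "'x measure \<Rightarrow> real \<Rightarrow> ('x \<Rightarrow> complex) \<Rightarrow> real" where
  "lp_norm M p f = (\<integral>x. norm (f x) powr p \<partial>M) powr (1 / p)"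

definition conj_exp :: "real \<Rightarrow> real" where
  "conj_exp p = p / (p - 1)"

definition ae_eq :: "'x measure \<Rightarrow> ('x \<Rightarrow> complex) \<Rightarrow> ('x \<Rightarrow> complex) \<Rightarrow> bool" where
  "ae_eq M f g \<longleftrightarrow> (AE x in M. f x = g x)"

definition separable_Lp :: "'x measure \<Rightarrow> real \<Rightarrow> bool" where
  "separable_Lp M p \<longleftrightarrow> (\<exists>D. countable D \<and> D \<subseteq> Lp M p \<and>
     (\<forall>f\<in>Lp M p. \<forall>\<epsilon>>0. \<exists>d\<in>D. lp_norm M p (\<lambda>x. f x - d x) < \<epsilon>))"

definition op_eq :: "'x measure \<Rightarrow> real \<Rightarrow> 'x op \<Rightarrow> 'x op \<Rightarrow> bool" where
  "op_eq M p T S \<longleftrightarrow> (\<forall>f\<in>Lp M p. ae_eq M (T f) (S f))"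

definition op_scale :: "complex \<Rightarrow> 'x op \<Rightarrow> 'x op" where
  "op_scale c T = (\<lambda>f x. c * T f x)"

definition bdd_op :: "'x measure \<Rightarrow> real \<Rightarrow> 'x op \<Rightarrow> bool" where
  "bdd_op M p T \<longleftrightarrow>
     (\<forall>f\<in>Lp M p. T f \<in> Lp M p) \<and>
     (\<forall>f\<in>Lp M p. \<forall>g\<in>Lp M p. ae_eq M f g \<longrightarrow> ae_eq M (T f) (T g)) \<and>
     (\<forall>f\<in>Lp M p. \<forall>g\<in>Lp M p. \<forall>c. ae_eq M (T (\<lambda>x. c * f x + g x)) (\<lambda>x. c * T f x + T g x)) \<and>
     (\<exists>C. \<forall>f\<in>Lp M p. lp_norm M p (T f) \<le> C * lp_norm M p f)"

definition op_norm :: "'x measure \<Rightarrow> real \<Rightarrow> 'x op \<Rightarrow> real" where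
  "op_norm M p T = Sup {lp_norm M p (T f) | f. f \<in> Lp M p \<and> lp_norm M p f \<le> 1}"

text \<open>A nuclear operator in E' (projective tensor) E, E = L^p, E' = L^q, represented by
  sequences (f_n) in L^p and (g_n) in L^q with sum of ||f_n|| ||g_n|| finite; it acts on B(E)
  by T maps to sum_n <T f_n, g_n>. These functionals define the weak* topology on B(E).\<close>
definition nuclear_rep :: "'x measure \<Rightarrow> real \<Rightarrow> (nat \<Rightarrow> 'x \<Rightarrow> complex) \<times> (nat \<Rightarrow> 'x \<Rightarrow> complex) \<Rightarrow> bool" where
  "nuclear_rep M p fg \<longleftrightarrow>
     (\<forall>n. fst fg n \<in> Lp M p \<and> snd fg n \<in> Lp M (conj_exp p)) \<and>
     summable (\<lambda>n. lp_norm M p (fst fg n) * lp_norm M (conj_exp p) (snd fg n))"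

definition nuc_apply :: "'x measure \<Rightarrow> (nat \<Rightarrow> 'x \<Rightarrow> complex) \<times> (nat \<Rightarrow> 'x \<Rightarrow> complex) \<Rightarrow> 'x op \<Rightarrow> complex" where
  "nuc_apply M fg T = (\<Sum>n. \<integral>x. T (fst fg n) x * snd fg n x \<partial>M)"

definition wstar_closure :: "'x measure \<Rightarrow> real \<Rightarrow> 'x op set \<Rightarrow> 'x op set" where
  "wstar_closure M p S = {T. bdd_op M p T \<and>
     (\<forall>\<Phi> \<epsilon>. finite \<Phi> \<and> \<Phi> \<subseteq> Collect (nuclear_rep M p) \<and> \<epsilon> > 0 \<longrightarrow>
        (\<exists>S'\<in>S. \<forall>\<phi>\<in>\<Phi>. norm (nuc_apply M \<phi> S' - nuc_apply M \<phi> T) < \<epsilon>))}"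

definition wstar_closed :: "'x measure \<Rightarrow> real \<Rightarrow> 'x op set \<Rightarrow> bool" where
  "wstar_closed M p S \<longleftrightarrow> S \<subseteq> Collect (bdd_op M p) \<and> wstar_closure M p S \<subseteq> S"

definition wstar_continuous_on ::
  "'x measure \<Rightarrow> real \<Rightarrow> 'x op set \<Rightarrow> 'y measure \<Rightarrow> real \<Rightarrow> ('x op \<Rightarrow> 'y op) \<Rightarrow> bool" where
  "wstar_continuous_on M p D N q F \<longleftrightarrow>
     (\<forall>T\<in>D. \<forall>\<psi>. nuclear_rep N q \<psi> \<longrightarrow> (\<forall>\<epsilon>>0. \<exists>\<Phi> \<delta>.
        finite \<Phi> \<and> \<Phi> \<subseteq> Collect (nuclear_rep M p) \<and> \<delta> > 0 \<and>
        (\<forall>S\<in>D. (\<forall>\<phi>\<in>\<Phi>. norm (nuc_apply M \<phi> S - nuc_apply M \<phi> T) < \<delta>) \<longrightarrow>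
            norm (nuc_apply N \<psi> (F S) - nuc_apply N \<psi> (F T)) < \<epsilon>)))"

definition wstar_closed_subalgebra :: "'x measure \<Rightarrow> real \<Rightarrow> 'x op set \<Rightarrow> bool" where
  "wstar_closed_subalgebra M p A \<longleftrightarrow> wstar_closed M p A \<and> 0 \<in> A \<and>
     (\<forall>a\<in>A. \<forall>b\<in>A. a + b \<in> A \<and> a \<circ> b \<in> A) \<and> (\<forall>c. \<forall>a\<in>A. op_scale c a \<in> A)"

definition wstar_isometric_action ::
  "'x measure \<Rightarrow> real \<Rightarrow> 'x op set \<Rightarrow> ('g::group_add \<Rightarrow> 'x op \<Rightarrow> 'x op) \<Rightarrow> bool" where
  "wstar_isometric_action M p A \<alpha> \<longleftrightarrow>
     (\<forall>s. \<forall>a\<in>A. \<alpha> s a \<in> A) \<and>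
     (\<forall>s. \<forall>a\<in>A. \<forall>b\<in>A. op_eq M p (\<alpha> s (a + b)) (\<alpha> s a + \<alpha> s b)) \<and>
     (\<forall>s. \<forall>a\<in>A. \<forall>b\<in>A. op_eq M p (\<alpha> s (a \<circ> b)) (\<alpha> s a \<circ> \<alpha> s b)) \<and>
     (\<forall>s c. \<forall>a\<in>A. op_eq M p (\<alpha> s (op_scale c a)) (op_scale c (\<alpha> s a))) \<and>
     (\<forall>s. \<forall>a\<in>A. op_norm M p (\<alpha> s a) = op_norm M p a) \<and>
     (\<forall>s. \<forall>b\<in>A. \<exists>a\<in>A. op_eq M p (\<alpha> s a) b) \<and>
     (\<forall>s. wstar_continuous_on M p A M p (\<alpha> s)) \<and>
     (\<forall>s t. \<forall>a\<in>A. op_eq M p (\<alpha> (s + t) a) (\<alpha> s (\<alpha> t a))) \<and>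
     (\<forall>a\<in>A. op_eq M p (\<alpha> 0 a) a)"

text \<open>l^p(G) \<otimes>_p L^p(M) is modelled as L^p of count_space G \<otimes> M.\<close>
definition cp_measure :: "'x measure \<Rightarrow> ('g \<times> 'x) measure" where
  "cp_measure M = count_space UNIV \<Otimes>\<^sub>M M"

definition cp_pi :: "('g::group_add \<Rightarrow> 'x op \<Rightarrow> 'x op) \<Rightarrow> 'x op \<Rightarrow> ('g \<times> 'x) op" where
  "cp_pi \<alpha> a = (\<lambda>\<xi> (s, x). \<alpha> (- s) a (\<lambda>y. \<xi> (s, y)) x)"

definition cp_lambda :: "'g::group_add \<Rightarrow> ('g \<times> 'x) op" where
  "cp_lambda s = (\<lambda>\<xi> (t, x). \<xi> (- s + t, x))"

definition cp_finsums ::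
  "'x op set \<Rightarrow> ('g::group_add \<Rightarrow> 'x op \<Rightarrow> 'x op) \<Rightarrow> ('g \<times> 'x) op set" where
  "cp_finsums A \<alpha> = {(\<Sum>s\<in>S. cp_pi \<alpha> (a s) \<circ> cp_lambda s) | S a. finite S \<and> (\<forall>s. a s \<in> A)}"

definition Wstar_crossed ::
  "'x measure \<Rightarrow> real \<Rightarrow> 'x op set \<Rightarrow> ('g::group_add \<Rightarrow> 'x op \<Rightarrow> 'x op) \<Rightarrow> ('g \<times> 'x) op set" where
  "Wstar_crossed M p A \<alpha> = wstar_closure (cp_measure M) p (cp_finsums A \<alpha>)"

end

theory Submission
  imports Defs
begin

text \<open>Write \<open>J\<^sub>u f = \<delta>\<^sub>u \<otimes> f\<close> for the embedding of \<open>L\<^sup>p(M)\<close> into the fibre \<open>u\<close> of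
  \<open>\<ell>\<^sup>p(G) \<otimes>\<^sub>p L\<^sup>p(M)\<close> and \<open>P\<^sub>0\<close> for restriction to the fibre \<open>0\<close>. Both are contractions, so
  \<open>E\<^sub>t w = P\<^sub>0 w J\<^sub>-\<^sub>t\<close> is a contraction. Since \<open>\<lambda>(s)\<close> shifts fibres, \<open>E\<^sub>t\<close> sends
  \<open>\<Sum>\<^sub>s \<pi>(a\<^sub>s)\<lambda>(s)\<close> to \<open>\<alpha>\<^sub>0(a\<^sub>t) = a\<^sub>t\<close>. Every nuclear functional \<open>\<phi>\<close> on \<open>B(L\<^sup>p(M))\<close> pulls back
  along \<open>E\<^sub>t\<close> to the nuclear functional \<open>\<phi> \<circ> E\<^sub>t\<close> obtained by applying \<open>J\<^sub>-\<^sub>t\<close> and \<open>J\<^sub>0\<close> to its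
  two factors; hence \<open>E\<^sub>t\<close> is weak* continuous and maps the weak* closure of the finite
  sums into the weak* closure of \<open>A\<close>, which is \<open>A\<close>.\<close>

lemma lp_norm_nonneg: "0 \<le> lp_norm M p f"
  by (simp add: lp_norm_def)

lemma Lp_zero: "(\<lambda>_. 0) \<in> Lp M p"
  by (simp add: Lp_def)

lemma sum_fun_apply: "sum F S x = (\<Sum>s\<in>S. F s x)"
  by (induction S rule: infinite_finite_induct) auto

lemma bdd_op_apply_zero:
  assumes "bdd_op M p T"
  shows "ae_eq M (T (\<lambda>_. 0)) (\<lambda>_. 0)"
proof -
  have lin: "\<forall>f\<in>Lp M p. \<forall>g\<in>Lp M p. \<forall>c. ae_eq M (T (\<lambda>x. c * f x + g x)) (\<lambda>x. c * T f x + T g x)"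
    using assms unfolding bdd_op_def by simp
  have "ae_eq M (T (\<lambda>x. 1 * 0 + 0)) (\<lambda>x. 1 * T (\<lambda>_. 0) x + T (\<lambda>_. 0) x)"
    using lin[rule_format, OF Lp_zero Lp_zero, of 1] .
  then have "AE x in M. T (\<lambda>_. 0) x = T (\<lambda>_. 0) x + T (\<lambda>_. 0) x"
    by (simp add: ae_eq_def)
  then show ?thesis
    unfolding ae_eq_def by (rule eventually_mono) simp
qed

lemma op_eq_refl: "op_eq M p X X"
  by (simp add: op_eq_def ae_eq_def)

lemma op_eq_trans:
  assumes "op_eq M p X Y" and "op_eq M p Y Z"
  shows "op_eq M p X Z"
  unfolding op_eq_def ae_eq_def
proof
  fix f assume "f \<in> Lp M p"
  then have "AE x in M. X f x = Y f x" and "AE x in M. Y f x = Z f x"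
    using assms unfolding op_eq_def ae_eq_def by auto
  then show "AE x in M. X f x = Z f x"
    by eventually_elim simp
qed

lemma op_eq_sym: "op_eq M p X Y \<Longrightarrow> op_eq M p Y X"
  unfolding op_eq_def ae_eq_def by (auto elim!: eventually_mono)

section \<open>Fibres of the product measure\<close>

definition delta_tensor :: "'g \<Rightarrow> ('x \<Rightarrow> 'b::zero) \<Rightarrow> ('g \<times> 'x \<Rightarrow> 'b)" where
  "delta_tensor u f = (\<lambda>(v, x). if v = u then f x else 0)"

lemma pair_sigma_finite_cp_measure:
  assumes "sigma_finite_measure M"
  shows "pair_sigma_finite (count_space (UNIV :: 'g::countable set)) M"
  by (intro pair_sigma_finite.intro sigma_finite_measure_count_space assms)

lemma delta_tensor_measurable:
  assumes "f \<in> borel_measurable M"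
  shows "delta_tensor u f \<in> borel_measurable (cp_measure M)"
proof -
  have "delta_tensor u f = (\<lambda>z. if fst z = u then f (snd z) else 0)"
    by (auto simp: delta_tensor_def fun_eq_iff)
  also have "\<dots> \<in> borel_measurable (cp_measure M)"
    using assms unfolding cp_measure_def by measurable
  finally show ?thesis .
qed

lemma fiber_measurable:
  assumes "h \<in> borel_measurable (cp_measure M)"
  shows "(\<lambda>x. h (u, x)) \<in> borel_measurable M"
  using measurable_Pair2[OF assms[unfolded cp_measure_def]] by simp

lemma nn_integral_delta_tensor:
  fixes u :: "'g::countable"
  assumes "sigma_finite_measure M" and "f \<in> borel_measurable M"
  shows "(\<integral>\<^sup>+z. norm (delta_tensor u f z) \<partial>cp_measure M) = (\<integral>\<^sup>+x. norm (f x) \<partial>M)"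
proof -
  interpret sigma_finite_measure M
    by (rule assms(1))
  have "(\<lambda>z. ennreal (norm (delta_tensor u f z))) \<in> borel_measurable (count_space UNIV \<Otimes>\<^sub>M M)"
    using delta_tensor_measurable[OF assms(2)] unfolding cp_measure_def by measurable
  then have "(\<integral>\<^sup>+z. norm (delta_tensor u f z) \<partial>cp_measure M)
      = (\<integral>\<^sup>+v. \<integral>\<^sup>+x. norm (delta_tensor u f (v, x)) \<partial>M \<partial>count_space UNIV)"
    unfolding cp_measure_def by (rule nn_integral_fst[symmetric])
  also have "\<dots> = (\<integral>\<^sup>+v. (\<integral>\<^sup>+x. norm (f x) \<partial>M) * indicator {u} v \<partial>count_space UNIV)"
    by (intro nn_integral_cong) (auto simp: delta_tensor_def indicator_def)
  also have "\<dots> = (\<integral>\<^sup>+x. norm (f x) \<partial>M)"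
    by (simp add: nn_integral_cmult_indicator)
  finally show ?thesis .
qed

lemma integrable_delta_tensor_iff:
  fixes u :: "'g::countable" and f :: "'x \<Rightarrow> 'b::{banach, second_countable_topology}"
  assumes "sigma_finite_measure M"
  shows "integrable (cp_measure M) (delta_tensor u f) \<longleftrightarrow> integrable M f"
proof
  assume int: "integrable (cp_measure M) (delta_tensor u f)"
  have "(\<lambda>x. delta_tensor u f (u, x)) \<in> borel_measurable M"
    using fiber_measurable[OF borel_measurable_integrable[OF int]] .
  then have fm: "f \<in> borel_measurable M"
    by (simp add: delta_tensor_def)
  then show "integrable M f"
    using int by (simp add: integrable_iff_bounded nn_integral_delta_tensor[OF assms fm])
next
  assume int: "integrable M f"
  then have fm: "f \<in> borel_measurable M"
    by auto
  then show "integrable (cp_measure M) (delta_tensor u f)"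
    using int
    by (simp add: integrable_iff_bounded nn_integral_delta_tensor[OF assms fm] delta_tensor_measurable)
qed

lemma integral_delta_tensor:
  fixes u :: "'g::countable" and f :: "'x \<Rightarrow> 'b::{banach, second_countable_topology}"
  assumes "sigma_finite_measure M"
  shows "integral\<^sup>L (cp_measure M) (delta_tensor u f) = integral\<^sup>L M f"
proof (cases "integrable M f")
  case True
  interpret pair_sigma_finite "count_space (UNIV :: 'g set)" M
    using pair_sigma_finite_cp_measure[OF assms] .
  have "integrable (count_space UNIV \<Otimes>\<^sub>M M) (delta_tensor u f)"
    using True integrable_delta_tensor_iff[OF assms, of u f] unfolding cp_measure_def by simp
  then have "integral\<^sup>L (cp_measure M) (delta_tensor u f)
      = (\<integral>v. (\<integral>x. delta_tensor u f (v, x) \<partial>M) \<partial>count_space UNIV)"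
    by (simp add: integral_fst' cp_measure_def)
  also have "\<dots> = (\<integral>v. (if v = u then integral\<^sup>L M f else 0) \<partial>count_space UNIV)"
    by (intro Bochner_Integration.integral_cong) (auto simp: delta_tensor_def)
  also have "\<dots> = integral\<^sup>L M f"
    by (subst lebesgue_integral_count_space_finite_support) auto
  finally show ?thesis .
next
  case False
  then show ?thesis
    using integrable_delta_tensor_iff[OF assms, of u f] by (simp add: not_integrable_integral_eq)
qed

lemma
  fixes u :: "'g::countable"
  assumes "sigma_finite_measure M" and f: "f \<in> Lp M p"
  shows Lp_delta_tensor: "delta_tensor u f \<in> Lp (cp_measure M) p"
    and lp_norm_delta_tensor: "lp_norm (cp_measure M) p (delta_tensor u f) = lp_norm M p f"
proof -
  have eq: "(\<lambda>z. norm (delta_tensor u f z) powr p) = delta_tensor u (\<lambda>x. norm (f x) powr p)"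
    by (auto simp: delta_tensor_def fun_eq_iff)
  have "integrable (cp_measure M) (\<lambda>z. norm (delta_tensor u f z) powr p)"
    using integrable_delta_tensor_iff[OF assms(1), of u "\<lambda>x. norm (f x) powr p"] f
    unfolding eq by (simp add: Lp_def)
  then show "delta_tensor u f \<in> Lp (cp_measure M) p"
    using f by (simp add: Lp_def delta_tensor_measurable)
  show "lp_norm (cp_measure M) p (delta_tensor u f) = lp_norm M p f"
    unfolding lp_norm_def eq integral_delta_tensor[OF assms(1)] ..
qed

lemma
  fixes u :: "'g::countable" and h :: "'g \<times> 'x \<Rightarrow> complex"
  assumes "sigma_finite_measure M" and h: "h \<in> Lp (cp_measure M) p" and "0 < p"
  shows Lp_fiber: "(\<lambda>x. h (u, x)) \<in> Lp M p"
    and lp_norm_fiber_le: "lp_norm M p (\<lambda>x. h (u, x)) \<le> lp_norm (cp_measure M) p h"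
proof -
  have hm: "h \<in> borel_measurable (cp_measure M)"
    and hi: "integrable (cp_measure M) (\<lambda>z. norm (h z) powr p)"
    using h by (auto simp: Lp_def)
  let ?g = "delta_tensor u (\<lambda>x. norm (h (u, x)) powr p)"
  have fm: "(\<lambda>x. h (u, x)) \<in> borel_measurable M"
    using fiber_measurable[OF hm] .
  have le: "?g z \<le> norm (h z) powr p" for z
    by (cases z) (auto simp: delta_tensor_def)
  have gi: "integrable (cp_measure M) ?g"
    using fm by (intro Bochner_Integration.integrable_bound[OF hi delta_tensor_measurable])
      (auto simp: delta_tensor_def le)
  then have "integrable M (\<lambda>x. norm (h (u, x)) powr p)"
    using integrable_delta_tensor_iff[OF assms(1)] by blast
  then show "(\<lambda>x. h (u, x)) \<in> Lp M p"
    using fm by (simp add: Lp_def)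
  have "(\<integral>x. norm (h (u, x)) powr p \<partial>M) = integral\<^sup>L (cp_measure M) ?g"
    by (simp add: integral_delta_tensor[OF assms(1)])
  also have "\<dots> \<le> (\<integral>z. norm (h z) powr p \<partial>cp_measure M)"
    by (rule Bochner_Integration.integral_mono[OF gi hi le])
  finally show "lp_norm M p (\<lambda>x. h (u, x)) \<le> lp_norm (cp_measure M) p h"
    unfolding lp_norm_def using \<open>0 < p\<close> by (intro powr_mono2) auto
qed

lemma AE_fiber:
  fixes u :: "'g::countable"
  assumes "sigma_finite_measure M" and "AE z in cp_measure M. P z"
  shows "AE x in M. P (u, x)"
proof -
  interpret pair_sigma_finite "count_space (UNIV :: 'g set)" M
    using pair_sigma_finite_cp_measure[OF assms(1)] .
  have "AE v in count_space UNIV. AE x in M. P (v, x)"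
    using AE_pair assms(2) unfolding cp_measure_def by blast
  then show ?thesis
    by (simp add: AE_count_space)
qed

lemma ae_eq_delta_tensor:
  fixes u :: "'g::countable"
  assumes "sigma_finite_measure M" and "f \<in> borel_measurable M" "g \<in> borel_measurable M"
    and "ae_eq M f g"
  shows "ae_eq (cp_measure M) (delta_tensor u f) (delta_tensor u g)"
proof -
  interpret pair_sigma_finite "count_space (UNIV :: 'g set)" M
    using pair_sigma_finite_cp_measure[OF assms(1)] .
  have "AE v in count_space UNIV. AE x in M. delta_tensor u f (v, x) = delta_tensor u g (v, x)"
    using assms(4) by (auto simp: ae_eq_def delta_tensor_def)
  then show ?thesis
    unfolding ae_eq_def cp_measure_def
    using assms(2,3) delta_tensor_measurable[unfolded cp_measure_def]
    by (intro AE_pair_measure) measurable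
qed

section \<open>The coefficient maps \<open>E\<^sub>t\<close>\<close>

definition fourier_coeff :: "'g::group_add \<Rightarrow> ('g \<times> 'x) op \<Rightarrow> 'x op" where
  "fourier_coeff t w = (\<lambda>f x. w (delta_tensor (- t) f) (0, x))"

lemma fourier_coeff_op_scale_add:
  "fourier_coeff t (op_scale c v + w) = op_scale c (fourier_coeff t v) + fourier_coeff t w"
  by (simp add: fourier_coeff_def op_scale_def fun_eq_iff)

lemma
  fixes t :: "'g::{group_add, countable}"
  assumes sf: "sigma_finite_measure M" and "0 < p" and w: "bdd_op (cp_measure M) p w"
    and f: "f \<in> Lp M p"
  shows Lp_fourier_coeff: "fourier_coeff t w f \<in> Lp M p"
    and lp_norm_fourier_coeff_le:
      "lp_norm M p (fourier_coeff t w f) \<le> lp_norm (cp_measure M) p (w (delta_tensor (- t) f))"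
proof -
  have "w (delta_tensor (- t) f) \<in> Lp (cp_measure M) p"
    using w Lp_delta_tensor[OF sf f, of "- t"] by (simp add: bdd_op_def)
  then show "fourier_coeff t w f \<in> Lp M p"
    and "lp_norm M p (fourier_coeff t w f) \<le> lp_norm (cp_measure M) p (w (delta_tensor (- t) f))"
    unfolding fourier_coeff_def using Lp_fiber[OF sf _ \<open>0 < p\<close>] lp_norm_fiber_le[OF sf _ \<open>0 < p\<close>]
    by auto
qed

lemma ae_eq_fourier_coeff:
  fixes t :: "'g::{group_add, countable}"
  assumes sf: "sigma_finite_measure M" and w: "bdd_op (cp_measure M) p w"
    and f: "f \<in> Lp M p" and g: "g \<in> Lp M p" and "ae_eq M f g"
  shows "ae_eq M (fourier_coeff t w f) (fourier_coeff t w g)"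
proof -
  have "ae_eq (cp_measure M) (delta_tensor (- t) f) (delta_tensor (- t) g)"
    using f g \<open>ae_eq M f g\<close> by (intro ae_eq_delta_tensor[OF sf]) (auto simp: Lp_def)
  then have "ae_eq (cp_measure M) (w (delta_tensor (- t) f)) (w (delta_tensor (- t) g))"
    using w Lp_delta_tensor[OF sf f, of "- t"] Lp_delta_tensor[OF sf g, of "- t"]
    unfolding bdd_op_def by blast
  then show ?thesis
    unfolding ae_eq_def fourier_coeff_def by (rule AE_fiber[OF sf])
qed

lemma fourier_coeff_linear_ae:
  fixes t :: "'g::{group_add, countable}"
  assumes sf: "sigma_finite_measure M" and w: "bdd_op (cp_measure M) p w"
    and f: "f \<in> Lp M p" and g: "g \<in> Lp M p"
  shows "ae_eq M (fourier_coeff t w (\<lambda>x. c * f x + g x))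
    (\<lambda>x. c * fourier_coeff t w f x + fourier_coeff t w g x)"
proof -
  have "delta_tensor (- t) (\<lambda>x. c * f x + g x)
      = (\<lambda>z. c * delta_tensor (- t) f z + delta_tensor (- t) g z)"
    by (auto simp: delta_tensor_def fun_eq_iff)
  then have "ae_eq (cp_measure M) (w (delta_tensor (- t) (\<lambda>x. c * f x + g x)))
      (\<lambda>z. c * w (delta_tensor (- t) f) z + w (delta_tensor (- t) g) z)"
    using w Lp_delta_tensor[OF sf f, of "- t"] Lp_delta_tensor[OF sf g, of "- t"]
    unfolding bdd_op_def by simp
  then show ?thesis
    unfolding ae_eq_def fourier_coeff_def by (rule AE_fiber[OF sf])
qed

lemma fourier_coeff_bounded:
  fixes t :: "'g::{group_add, countable}"
  assumes sf: "sigma_finite_measure M" and "0 < p" and w: "bdd_op (cp_measure M) p w"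
  shows "\<exists>C. \<forall>f\<in>Lp M p. lp_norm M p (fourier_coeff t w f) \<le> C * lp_norm M p f"
proof -
  obtain C where C: "\<And>\<xi>. \<xi> \<in> Lp (cp_measure M) p \<Longrightarrow>
      lp_norm (cp_measure M) p (w \<xi>) \<le> C * lp_norm (cp_measure M) p \<xi>"
    using w unfolding bdd_op_def by blast
  have "lp_norm M p (fourier_coeff t w f) \<le> C * lp_norm M p f" if f: "f \<in> Lp M p" for f
  proof -
    have "lp_norm M p (fourier_coeff t w f) \<le> lp_norm (cp_measure M) p (w (delta_tensor (- t) f))"
      by (rule lp_norm_fourier_coeff_le[OF assms f])
    also have "\<dots> \<le> C * lp_norm (cp_measure M) p (delta_tensor (- t) f)"
      by (rule C[OF Lp_delta_tensor[OF sf f]])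
    also have "\<dots> = C * lp_norm M p f"
      by (simp add: lp_norm_delta_tensor[OF sf f])
    finally show ?thesis .
  qed
  then show ?thesis
    by blast
qed

lemma bdd_op_fourier_coeff:
  fixes t :: "'g::{group_add, countable}"
  assumes sf: "sigma_finite_measure M" and "0 < p" and w: "bdd_op (cp_measure M) p w"
  shows "bdd_op M p (fourier_coeff t w)"
  unfolding bdd_op_def
  using Lp_fourier_coeff[OF assms] ae_eq_fourier_coeff[OF sf w]
    fourier_coeff_linear_ae[OF sf w] fourier_coeff_bounded[OF assms]
  by blast

lemma op_norm_fourier_coeff_le:
  fixes t :: "'g::{group_add, countable}"
  assumes sf: "sigma_finite_measure M" and "0 < p" and w: "bdd_op (cp_measure M) p w"
  shows "op_norm M p (fourier_coeff t w) \<le> op_norm (cp_measure M) p w"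
proof -
  obtain C where C: "\<And>\<xi>. \<xi> \<in> Lp (cp_measure M) p \<Longrightarrow>
      lp_norm (cp_measure M) p (w \<xi>) \<le> C * lp_norm (cp_measure M) p \<xi>"
    using w unfolding bdd_op_def by blast
  let ?B = "{lp_norm (cp_measure M) p (w \<xi>) | \<xi>. \<xi> \<in> Lp (cp_measure M) p \<and> lp_norm (cp_measure M) p \<xi> \<le> 1}"
  have "bdd_above ?B"
  proof (rule bdd_aboveI)
    fix y assume "y \<in> ?B"
    then obtain \<xi> where \<xi>: "\<xi> \<in> Lp (cp_measure M) p" "lp_norm (cp_measure M) p \<xi> \<le> 1"
      and y: "y = lp_norm (cp_measure M) p (w \<xi>)"
      by blast
    have "y \<le> C * lp_norm (cp_measure M) p \<xi>"
      using C[OF \<xi>(1)] y by simp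
    also have "\<dots> \<le> \<bar>C\<bar> * lp_norm (cp_measure M) p \<xi>"
      by (intro mult_right_mono) (auto simp: lp_norm_nonneg)
    also have "\<dots> \<le> \<bar>C\<bar> * 1"
      using \<xi>(2) by (intro mult_left_mono) auto
    finally show "y \<le> \<bar>C\<bar>" by simp
  qed
  have "{lp_norm M p (fourier_coeff t w f) | f. f \<in> Lp M p \<and> lp_norm M p f \<le> 1} \<noteq> {}"
    using Lp_zero[of M p] by (auto simp: lp_norm_def)
  then show ?thesis
    unfolding op_norm_def
  proof (rule cSup_least)
    fix y assume "y \<in> {lp_norm M p (fourier_coeff t w f) | f. f \<in> Lp M p \<and> lp_norm M p f \<le> 1}"
    then obtain f where f: "f \<in> Lp M p" "lp_norm M p f \<le> 1"
      and y: "y = lp_norm M p (fourier_coeff t w f)"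
      by blast
    have "y \<le> lp_norm (cp_measure M) p (w (delta_tensor (- t) f))"
      using lp_norm_fourier_coeff_le[OF assms f(1)] y by simp
    also have "\<dots> \<le> Sup ?B"
      using f Lp_delta_tensor[OF sf f(1), of "- t"] lp_norm_delta_tensor[OF sf f(1), of "- t"]
      by (intro cSup_upper[OF _ \<open>bdd_above ?B\<close>]) auto
    finally show "y \<le> Sup ?B" .
  qed
qed

lemma fourier_coeff_finsum:
  "fourier_coeff t (\<Sum>s\<in>S. cp_pi \<alpha> (a s) \<circ> cp_lambda s) f
     = (\<lambda>x. \<Sum>s\<in>S. \<alpha> 0 (a s) (\<lambda>y. if s = t then f y else 0) x)"
  by (auto simp: fourier_coeff_def sum_fun_apply cp_pi_def cp_lambda_def delta_tensor_def fun_eq_iff)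

text \<open>The terms with \<open>s \<noteq> t\<close> are \<open>\<alpha>\<^sub>0(a\<^sub>s)\<close> applied to the zero function, which vanishes
  only almost everywhere.\<close>

lemma
  fixes t :: "'g::group_add"
  assumes "finite S" and bdd: "\<And>s. bdd_op M p (\<alpha> 0 (a s))" and f: "f \<in> Lp M p"
  shows fourier_coeff_finsum_measurable:
      "fourier_coeff t (\<Sum>s\<in>S. cp_pi \<alpha> (a s) \<circ> cp_lambda s) f \<in> borel_measurable M"
    and AE_fourier_coeff_finsum:
      "AE x in M. fourier_coeff t (\<Sum>s\<in>S. cp_pi \<alpha> (a s) \<circ> cp_lambda s) f x
         = (if t \<in> S then \<alpha> 0 (a t) f x else 0)"
proof -
  have "(\<lambda>y. if s = t then f y else 0) \<in> Lp M p" for s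
    using f Lp_zero[of M p] by (cases "s = t") auto
  then have "\<alpha> 0 (a s) (\<lambda>y. if s = t then f y else 0) \<in> borel_measurable M" for s
    using bdd[of s] by (auto simp: bdd_op_def Lp_def)
  then show "fourier_coeff t (\<Sum>s\<in>S. cp_pi \<alpha> (a s) \<circ> cp_lambda s) f \<in> borel_measurable M"
    unfolding fourier_coeff_finsum by (intro borel_measurable_sum)
  have "AE x in M. \<alpha> 0 (a s) (\<lambda>_. 0) x = 0" for s
    using bdd_op_apply_zero[OF bdd[of s]] by (simp add: ae_eq_def)
  then have "AE x in M. \<forall>s\<in>S - {t}. \<alpha> 0 (a s) (\<lambda>_. 0) x = 0"
    using \<open>finite S\<close> by (intro AE_finite_allI) auto
  then show "AE x in M. fourier_coeff t (\<Sum>s\<in>S. cp_pi \<alpha> (a s) \<circ> cp_lambda s) f x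
      = (if t \<in> S then \<alpha> 0 (a t) f x else 0)"
  proof (rule eventually_mono)
    fix x assume "\<forall>s\<in>S - {t}. \<alpha> 0 (a s) (\<lambda>_. 0) x = 0"
    then have "(\<Sum>s\<in>S. \<alpha> 0 (a s) (\<lambda>y. if s = t then f y else 0) x)
        = (\<Sum>s\<in>S. if s = t then \<alpha> 0 (a t) f x else 0)"
      by (intro sum.cong) auto
    then show "fourier_coeff t (\<Sum>s\<in>S. cp_pi \<alpha> (a s) \<circ> cp_lambda s) f x
        = (if t \<in> S then \<alpha> 0 (a t) f x else 0)"
      unfolding fourier_coeff_finsum using \<open>finite S\<close> by (simp add: sum.delta)
  qed
qed

lemma fourier_coeff_finsum_op_eq:
  fixes t :: "'g::group_add"
  assumes "finite S" and "\<And>s. bdd_op M p (\<alpha> 0 (a s))"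
  shows "op_eq M p (fourier_coeff t (\<Sum>s\<in>S. cp_pi \<alpha> (a s) \<circ> cp_lambda s))
    (if t \<in> S then \<alpha> 0 (a t) else 0)"
  unfolding op_eq_def ae_eq_def
proof
  fix f assume "f \<in> Lp M p"
  from AE_fourier_coeff_finsum[where \<alpha> = \<alpha> and a = a and t = t, OF assms this]
  show "AE x in M. fourier_coeff t (\<Sum>s\<in>S. cp_pi \<alpha> (a s) \<circ> cp_lambda s) f x
      = (if t \<in> S then \<alpha> 0 (a t) else 0) f x"
    by (rule eventually_mono) simp
qed

section \<open>Nuclear functionals\<close>

definition preadjoint ::
  "'x measure \<Rightarrow> real \<Rightarrow> 'y measure \<Rightarrow> real
    \<Rightarrow> ((nat \<Rightarrow> 'x \<Rightarrow> complex) \<times> (nat \<Rightarrow> 'x \<Rightarrow> complex) \<Rightarrow> (nat \<Rightarrow> 'y \<Rightarrow> complex) \<times> (nat \<Rightarrow> 'y \<Rightarrow> complex))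
    \<Rightarrow> ('y op \<Rightarrow> 'x op) \<Rightarrow> bool" where
  "preadjoint M p N q \<Psi> F \<longleftrightarrow>
     (\<forall>\<phi>. nuclear_rep M p \<phi> \<longrightarrow>
        nuclear_rep N q (\<Psi> \<phi>) \<and> (\<forall>T. nuc_apply M \<phi> (F T) = nuc_apply N (\<Psi> \<phi>) T))"

lemma preadjointD:
  assumes "preadjoint M p N q \<Psi> F" and "nuclear_rep M p \<phi>"
  shows "nuclear_rep N q (\<Psi> \<phi>)" and "nuc_apply M \<phi> (F T) = nuc_apply N (\<Psi> \<phi>) T"
  using assms unfolding preadjoint_def by blast+

lemma wstar_continuous_on_preadjoint:
  assumes "preadjoint M p N q \<Psi> F"
  shows "wstar_continuous_on N q D M p F"
  unfolding wstar_continuous_on_def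
proof (intro ballI allI impI)
  fix T \<psi> and \<epsilon> :: real
  assume \<psi>: "nuclear_rep M p \<psi>" and "0 < \<epsilon>"
  show "\<exists>\<Phi> \<delta>. finite \<Phi> \<and> \<Phi> \<subseteq> Collect (nuclear_rep N q) \<and> \<delta> > 0 \<and>
      (\<forall>S\<in>D. (\<forall>\<phi>\<in>\<Phi>. norm (nuc_apply N \<phi> S - nuc_apply N \<phi> T) < \<delta>) \<longrightarrow>
         norm (nuc_apply M \<psi> (F S) - nuc_apply M \<psi> (F T)) < \<epsilon>)"
    by (intro exI[of _ "{\<Psi> \<psi>}"] exI[of _ \<epsilon>])
      (simp add: \<open>0 < \<epsilon>\<close> preadjointD[OF assms \<psi>])
qed

lemma preadjoint_image_wstar_closure:
  assumes pre: "preadjoint M p N q \<Psi> F" and T: "T \<in> wstar_closure N q S"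
    and "bdd_op M p (F T)"
    and approx: "\<And>S'. S' \<in> S \<Longrightarrow>
      \<exists>X\<in>B. \<forall>\<phi>. nuclear_rep M p \<phi> \<longrightarrow> nuc_apply M \<phi> X = nuc_apply M \<phi> (F S')"
  shows "F T \<in> wstar_closure M p B"
  unfolding wstar_closure_def
proof (intro CollectI conjI allI impI)
  fix \<Phi> and \<epsilon> :: real
  assume \<Phi>: "finite \<Phi> \<and> \<Phi> \<subseteq> Collect (nuclear_rep M p) \<and> 0 < \<epsilon>"
  have T_approx: "\<forall>\<Phi>' \<epsilon>'. finite \<Phi>' \<and> \<Phi>' \<subseteq> Collect (nuclear_rep N q) \<and> \<epsilon>' > 0 \<longrightarrow>
      (\<exists>S'\<in>S. \<forall>\<psi>\<in>\<Phi>'. norm (nuc_apply N \<psi> S' - nuc_apply N \<psi> T) < \<epsilon>')"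
    using T unfolding wstar_closure_def by blast
  have "\<Psi> ` \<Phi> \<subseteq> Collect (nuclear_rep N q)"
    using \<Phi> preadjointD(1)[OF pre] by blast
  then obtain S' where "S' \<in> S"
    and close: "\<forall>\<psi>\<in>\<Psi> ` \<Phi>. norm (nuc_apply N \<psi> S' - nuc_apply N \<psi> T) < \<epsilon>"
    using T_approx \<Phi> by (meson finite_imageI)
  obtain X where "X \<in> B"
    and X: "\<And>\<phi>. nuclear_rep M p \<phi> \<Longrightarrow> nuc_apply M \<phi> X = nuc_apply M \<phi> (F S')"
    using approx[OF \<open>S' \<in> S\<close>] by blast
  have "norm (nuc_apply M \<phi> X - nuc_apply M \<phi> (F T)) < \<epsilon>" if "\<phi> \<in> \<Phi>" for \<phi>
  proof -
    have "nuclear_rep M p \<phi>"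
      using that \<Phi> by blast
    then show ?thesis
      using close that by (simp add: X preadjointD(2)[OF pre])
  qed
  with \<open>X \<in> B\<close> show "\<exists>X\<in>B. \<forall>\<phi>\<in>\<Phi>. norm (nuc_apply M \<phi> X - nuc_apply M \<phi> (F T)) < \<epsilon>"
    by blast
qed (fact)

lemma nuc_apply_op_eq:
  assumes \<phi>: "nuclear_rep M p \<phi>" and eq: "op_eq M p X Y"
    and X: "\<And>f. f \<in> Lp M p \<Longrightarrow> X f \<in> borel_measurable M"
    and Y: "\<And>f. f \<in> Lp M p \<Longrightarrow> Y f \<in> borel_measurable M"
  shows "nuc_apply M \<phi> X = nuc_apply M \<phi> Y"
proof -
  have "(\<integral>x. X (fst \<phi> n) x * snd \<phi> n x \<partial>M) = (\<integral>x. Y (fst \<phi> n) x * snd \<phi> n x \<partial>M)" for n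
  proof (rule integral_cong_AE)
    have f: "fst \<phi> n \<in> Lp M p" and g: "snd \<phi> n \<in> borel_measurable M"
      using \<phi> by (auto simp: nuclear_rep_def Lp_def)
    show "(\<lambda>x. X (fst \<phi> n) x * snd \<phi> n x) \<in> borel_measurable M"
      using X[OF f] g by measurable
    show "(\<lambda>x. Y (fst \<phi> n) x * snd \<phi> n x) \<in> borel_measurable M"
      using Y[OF f] g by measurable
    have "AE x in M. X (fst \<phi> n) x = Y (fst \<phi> n) x"
      using eq f unfolding op_eq_def ae_eq_def by blast
    then show "AE x in M. X (fst \<phi> n) x * snd \<phi> n x = Y (fst \<phi> n) x * snd \<phi> n x"
      by (rule eventually_mono) simp
  qed
  then show ?thesis
    unfolding nuc_apply_def by simp
qed

definition coeff_pullback ::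
  "'g::group_add \<Rightarrow> (nat \<Rightarrow> 'x \<Rightarrow> complex) \<times> (nat \<Rightarrow> 'x \<Rightarrow> complex)
    \<Rightarrow> (nat \<Rightarrow> 'g \<times> 'x \<Rightarrow> complex) \<times> (nat \<Rightarrow> 'g \<times> 'x \<Rightarrow> complex)" where
  "coeff_pullback t \<phi> = ((\<lambda>n. delta_tensor (- t) (fst \<phi> n)), (\<lambda>n. delta_tensor 0 (snd \<phi> n)))"

lemma preadjoint_fourier_coeff:
  fixes t :: "'g::{group_add, countable}"
  assumes sf: "sigma_finite_measure M"
  shows "preadjoint M p (cp_measure M) p (coeff_pullback t) (fourier_coeff t)"
  unfolding preadjoint_def
proof (intro allI impI conjI)
  fix \<phi> T assume "nuclear_rep M p \<phi>"
  then show "nuclear_rep (cp_measure M) p (coeff_pullback t \<phi>)"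
    unfolding nuclear_rep_def coeff_pullback_def
    by (simp add: Lp_delta_tensor[OF sf] lp_norm_delta_tensor[OF sf])
  have "(\<lambda>z. T (fst (coeff_pullback t \<phi>) n) z * snd (coeff_pullback t \<phi>) n z)
      = delta_tensor 0 (\<lambda>x. fourier_coeff t T (fst \<phi> n) x * snd \<phi> n x)" for n
    by (auto simp: coeff_pullback_def fourier_coeff_def delta_tensor_def fun_eq_iff)
  then show "nuc_apply M \<phi> (fourier_coeff t T) = nuc_apply (cp_measure M) (coeff_pullback t \<phi>) T"
    unfolding nuc_apply_def by (simp add: integral_delta_tensor[OF sf])
qed

lemma fourier_coeff_cp_finsums:
  fixes t :: "'g::{group_add, countable}"
  assumes A_bdd: "\<And>a. a \<in> A \<Longrightarrow> bdd_op M p a" and "0 \<in> A"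
    and \<alpha>_A: "\<And>a. a \<in> A \<Longrightarrow> \<alpha> 0 a \<in> A" and "S' \<in> cp_finsums A \<alpha>"
  shows "\<exists>X\<in>A. \<forall>\<phi>. nuclear_rep M p \<phi> \<longrightarrow> nuc_apply M \<phi> X = nuc_apply M \<phi> (fourier_coeff t S')"
proof -
  obtain S a where S': "S' = (\<Sum>s\<in>S. cp_pi \<alpha> (a s) \<circ> cp_lambda s)"
    and "finite S" and a: "\<forall>s. a s \<in> A"
    using \<open>S' \<in> cp_finsums A \<alpha>\<close> unfolding cp_finsums_def by blast
  let ?X = "if t \<in> S then \<alpha> 0 (a t) else 0"
  have "?X \<in> A"
    using \<open>0 \<in> A\<close> \<alpha>_A a by simp
  have bdd: "\<And>s. bdd_op M p (\<alpha> 0 (a s))"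
    using A_bdd \<alpha>_A a by blast
  have "nuc_apply M \<phi> ?X = nuc_apply M \<phi> (fourier_coeff t S')" if "nuclear_rep M p \<phi>" for \<phi>
    unfolding S'
  proof (rule nuc_apply_op_eq[OF that op_eq_sym])
    show "op_eq M p (fourier_coeff t (\<Sum>s\<in>S. cp_pi \<alpha> (a s) \<circ> cp_lambda s)) ?X"
      by (rule fourier_coeff_finsum_op_eq[where \<alpha> = \<alpha> and a = a, OF \<open>finite S\<close> bdd])
    show "?X f \<in> borel_measurable M" if "f \<in> Lp M p" for f
      using A_bdd[OF \<open>?X \<in> A\<close>] that by (auto simp: bdd_op_def Lp_def)
    show "fourier_coeff t (\<Sum>s\<in>S. cp_pi \<alpha> (a s) \<circ> cp_lambda s) f \<in> borel_measurable M"
      if "f \<in> Lp M p" for f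
      by (rule fourier_coeff_finsum_measurable[where \<alpha> = \<alpha> and a = a, OF \<open>finite S\<close> bdd that])
  qed
  with \<open>?X \<in> A\<close> show ?thesis
    by blast
qed

lemma fourier_coeff_mem_wstar_closed:
  fixes t :: "'g::{group_add, countable}"
  assumes sf: "sigma_finite_measure M" and "0 < p"
    and A_bdd: "\<And>a. a \<in> A \<Longrightarrow> bdd_op M p a" and A_closed: "wstar_closure M p A \<subseteq> A"
    and "0 \<in> A" and \<alpha>_A: "\<And>a. a \<in> A \<Longrightarrow> \<alpha> 0 a \<in> A"
    and w: "w \<in> Wstar_crossed M p A \<alpha>"
  shows "fourier_coeff t w \<in> A"
proof -
  have "bdd_op (cp_measure M) p w"
    using w by (simp add: Wstar_crossed_def wstar_closure_def)
  then have bdd: "bdd_op M p (fourier_coeff t w)"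
    by (rule bdd_op_fourier_coeff[OF sf \<open>0 < p\<close>])
  have "fourier_coeff t w \<in> wstar_closure M p A"
  proof (rule preadjoint_image_wstar_closure[where \<Psi> = "coeff_pullback t" and T = w
        and S = "cp_finsums A \<alpha>"])
    show "preadjoint M p (cp_measure M) p (coeff_pullback t) (fourier_coeff t)"
      by (rule preadjoint_fourier_coeff[OF sf])
    show "w \<in> wstar_closure (cp_measure M) p (cp_finsums A \<alpha>)"
      using w by (simp add: Wstar_crossed_def)
  qed (fact bdd, rule fourier_coeff_cp_finsums[where \<alpha> = \<alpha>, OF A_bdd \<open>0 \<in> A\<close> \<alpha>_A])
  then show ?thesis
    using A_closed by blast
qed

theorem mainTheorem7:
  fixes M :: "'x measure" and p :: real and A :: "'x op set"
    and \<alpha> :: "'g::{group_add, countable} \<Rightarrow> 'x op \<Rightarrow> 'x op"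
  assumes "1 < p"
    and "sigma_finite_measure M"
    and "separable_Lp M p"
    and "wstar_closed_subalgebra M p A"
    and "wstar_isometric_action M p A \<alpha>"
  shows "\<forall>t. \<exists>E :: ('g \<times> 'x) op \<Rightarrow> 'x op.
     (\<forall>w\<in>Wstar_crossed M p A \<alpha>. E w \<in> A) \<and>
     (\<forall>c. \<forall>v\<in>Wstar_crossed M p A \<alpha>. \<forall>w\<in>Wstar_crossed M p A \<alpha>.
        op_eq M p (E (op_scale c v + w)) (op_scale c (E v) + E w)) \<and>
     (\<forall>w\<in>Wstar_crossed M p A \<alpha>. op_norm M p (E w) \<le> op_norm (cp_measure M) p w) \<and>
     wstar_continuous_on (cp_measure M) p (Wstar_crossed M p A \<alpha>) M p E \<and>
     (\<forall>S a. finite S \<and> (\<forall>s. a s \<in> A) \<and> (\<forall>s. s \<notin> S \<longrightarrow> op_eq M p (a s) 0) \<longrightarrow>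
        op_eq M p (E (\<Sum>s\<in>S. cp_pi \<alpha> (a s) \<circ> cp_lambda s)) (a t))"
proof -
  have "0 < p" and sf: "sigma_finite_measure M"
    using assms(1,2) by simp_all
  have A_bdd: "\<And>a. a \<in> A \<Longrightarrow> bdd_op M p a" and "wstar_closure M p A \<subseteq> A" and "0 \<in> A"
    using assms(4) unfolding wstar_closed_subalgebra_def wstar_closed_def by blast+
  have \<alpha>_A: "\<And>a. a \<in> A \<Longrightarrow> \<alpha> 0 a \<in> A" and \<alpha>_0: "\<And>a. a \<in> A \<Longrightarrow> op_eq M p (\<alpha> 0 a) a"
    using assms(5) unfolding wstar_isometric_action_def by blast+
  have W_bdd: "\<And>w. w \<in> Wstar_crossed M p A \<alpha> \<Longrightarrow> bdd_op (cp_measure M) p w"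
    by (simp add: Wstar_crossed_def wstar_closure_def)
  have finsum: "op_eq M p (fourier_coeff t (\<Sum>s\<in>S. cp_pi \<alpha> (a s) \<circ> cp_lambda s)) (a t)"
    if "finite S" and a: "\<forall>s. a s \<in> A" and "\<forall>s. s \<notin> S \<longrightarrow> op_eq M p (a s) 0" for t S a
  proof (rule op_eq_trans)
    show "op_eq M p (fourier_coeff t (\<Sum>s\<in>S. cp_pi \<alpha> (a s) \<circ> cp_lambda s))
        (if t \<in> S then \<alpha> 0 (a t) else 0)"
      using A_bdd \<alpha>_A a by (intro fourier_coeff_finsum_op_eq[where \<alpha> = \<alpha> and a = a, OF \<open>finite S\<close>]) blast
    show "op_eq M p (if t \<in> S then \<alpha> 0 (a t) else 0) (a t)"
      using that \<alpha>_0 op_eq_sym[of M p "a t" 0] by (cases "t \<in> S") auto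
  qed
  show ?thesis
    using fourier_coeff_mem_wstar_closed[where \<alpha> = \<alpha>, OF sf \<open>0 < p\<close> A_bdd
        \<open>wstar_closure M p A \<subseteq> A\<close> \<open>0 \<in> A\<close> \<alpha>_A]
      op_norm_fourier_coeff_le[OF sf \<open>0 < p\<close> W_bdd]
      wstar_continuous_on_preadjoint[OF preadjoint_fourier_coeff[OF sf]] finsum
    by (intro allI, rule_tac x = "fourier_coeff t" in exI) (simp add: fourier_coeff_op_scale_add op_eq_refl)
qed

end
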